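(* Let $(\mathcal X,R)$ be a quantum poset such that $\mathcal X$ has only finitely many atoms. Then $(\mathcal X,R)$ is a quantum cpo.
   Context: A quantum set $\mathcal X$ is a set $\mathrm{At}(\mathcal X)$ of nonzero finite-dimensional Hilbert spaces (atoms). A relation $R$ from $\mathcal X$ to $\mathcal Y$ is a choice of subspaces $R(X,Y)\subseteq L(X,Y)$ for all atoms. Composition: $(S\circ R)(X,Z)=\mathrm{span}\{sr: r\in R(X,Y), s\in S(Y,Z), Y\in\mathrm{At}(\mathcal Y)\}$; identity $I_{\mathcal X}(X,X)=\mathbb C 1_X$ and $0$ off the diagonal; adjoint $R^\dagger(Y,X)=\{r^\dagger: r\in R(X,Y)\}$; $R\le S$ entrywise inclusion; $\bigwedge$ entrywise intersection. A function $F:\mathcal X\to\mathcal Y$ is a relation with $F\circ F^\dagger\le I_{\mathcal Y}$ and $F^\dagger\circ F\ge I_{\mathcal X}$. A quantum poset is $(\mathcal X,R)$ with $I_{\mathcal X}\le R$, $R\circ R\le R$, $R\wedge R^\dagger\le I_{\mathcal X}$. For functions $F,G:\mathcal W\to\mathcal X$, $F\sqsubseteq G$ means $G\le R\circ F$. For an increasing sequence $K_1\sqsubseteq K_2\sqsubseteq\cdots:\mathcal W\to\mathcal X$, write $K_n\nearrow K_\infty$ if $K_\infty:\mathcal W\to\mathcal X$ is a function with $R\circ K_\infty=\bigwedge_{n}R\circ K_n$. $\mathbf H_d$ denotes the quantum set whose single atom is $\mathbb C^d$. A quantum poset $(\mathcal X,R)$ is a quantum cpo if for every $d\ge 1$ and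 every increasing sequence $K_1\sqsubseteq K_2\sqsubseteq\cdots:\mathbf H_d\to\mathcal X$ there is a function $K_\infty:\mathbf H_d\to\mathcal X$ with $K_n\nearrow K_\infty$. *)

theory Defs
  imports "Jordan_Normal_Form.Schur_Decomposition"
begin

text \<open>A quantum set is modelled by an index set of atoms At together with a
dimension function: the atom with index x is the Hilbert space C^(dim x),
required to be nonzero (dim x > 0).  A linear map C^m -> C^n is an n x m
complex matrix.\<close>

definition qset :: "'i set \<Rightarrow> ('i \<Rightarrow> nat) \<Rightarrow> bool" where
  "qset A d \<longleftrightarrow> (\<forall>x\<in>A. 0 < d x)"

definition msubspace :: "nat \<Rightarrow> nat \<Rightarrow> complex mat set \<Rightarrow> bool" where
  "msubspace n m V \<longleftrightarrow> V \<subseteq> carrier_mat n m \<and> 0\<^sub>m n m \<in> V \<and>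
     (\<forall>a\<in>V. \<forall>b\<in>V. a + b \<in> V) \<and> (\<forall>c. \<forall>a\<in>V. c \<cdot>\<^sub>m a \<in> V)"

definition mspan :: "nat \<Rightarrow> nat \<Rightarrow> complex mat set \<Rightarrow> complex mat set" where
  "mspan n m S = \<Inter> {V. msubspace n m V \<and> S \<subseteq> V}"

definition qrel :: "'i set \<Rightarrow> ('i \<Rightarrow> nat) \<Rightarrow> 'j set \<Rightarrow> ('j \<Rightarrow> nat)
    \<Rightarrow> ('i \<Rightarrow> 'j \<Rightarrow> complex mat set) \<Rightarrow> bool" where
  "qrel A dA B dB R \<longleftrightarrow> (\<forall>x\<in>A. \<forall>y\<in>B. msubspace (dB y) (dA x) (R x y))"

text \<open>Composition S o R of R : X -> Y and S : Y -> Z (summing over the atoms B of Y).\<close>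
definition qcomp :: "'j set \<Rightarrow> ('i \<Rightarrow> nat) \<Rightarrow> ('k \<Rightarrow> nat)
    \<Rightarrow> ('j \<Rightarrow> 'k \<Rightarrow> complex mat set) \<Rightarrow> ('i \<Rightarrow> 'j \<Rightarrow> complex mat set)
    \<Rightarrow> ('i \<Rightarrow> 'k \<Rightarrow> complex mat set)" where
  "qcomp B dA dC S R = (\<lambda>x z. mspan (dC z) (dA x)
      {s * r | y r s. y \<in> B \<and> r \<in> R x y \<and> s \<in> S y z})"

definition qid :: "('i \<Rightarrow> nat) \<Rightarrow> ('i \<Rightarrow> 'i \<Rightarrow> complex mat set)" where
  "qid d = (\<lambda>x x'. if x = x' then {c \<cdot>\<^sub>m 1\<^sub>m (d x) | c. True} else {0\<^sub>m (d x') (d x)})"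

definition qadj :: "('i \<Rightarrow> 'j \<Rightarrow> complex mat set) \<Rightarrow> ('j \<Rightarrow> 'i \<Rightarrow> complex mat set)" where
  "qadj R = (\<lambda>y x. mat_adjoint ` R x y)"

definition qle :: "'i set \<Rightarrow> 'j set \<Rightarrow> ('i \<Rightarrow> 'j \<Rightarrow> complex mat set)
    \<Rightarrow> ('i \<Rightarrow> 'j \<Rightarrow> complex mat set) \<Rightarrow> bool" where
  "qle A B R S \<longleftrightarrow> (\<forall>x\<in>A. \<forall>y\<in>B. R x y \<subseteq> S x y)"

definition qfun :: "'i set \<Rightarrow> ('i \<Rightarrow> nat) \<Rightarrow> 'j set \<Rightarrow> ('j \<Rightarrow> nat)
    \<Rightarrow> ('i \<Rightarrow> 'j \<Rightarrow> complex mat set) \<Rightarrow> bool" where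
  "qfun A dA B dB F \<longleftrightarrow> qrel A dA B dB F \<and>
     qle B B (qcomp A dB dB F (qadj F)) (qid dB) \<and>
     qle A A (qid dA) (qcomp B dA dA (qadj F) F)"

definition qposet :: "'i set \<Rightarrow> ('i \<Rightarrow> nat) \<Rightarrow> ('i \<Rightarrow> 'i \<Rightarrow> complex mat set) \<Rightarrow> bool" where
  "qposet A d R \<longleftrightarrow> qset A d \<and> qrel A d A d R \<and> qle A A (qid d) R \<and>
     qle A A (qcomp A d d R R) R \<and> qle A A (\<lambda>x y. R x y \<inter> qadj R x y) (qid d)"

definition qsqle :: "'w set \<Rightarrow> ('w \<Rightarrow> nat) \<Rightarrow> 'i set \<Rightarrow> ('i \<Rightarrow> nat)
    \<Rightarrow> ('i \<Rightarrow> 'i \<Rightarrow> complex mat set)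
    \<Rightarrow> ('w \<Rightarrow> 'i \<Rightarrow> complex mat set) \<Rightarrow> ('w \<Rightarrow> 'i \<Rightarrow> complex mat set) \<Rightarrow> bool" where
  "qsqle W dW A d R F G \<longleftrightarrow> qle W A G (qcomp A dW d R F)"

definition qconv :: "'w set \<Rightarrow> ('w \<Rightarrow> nat) \<Rightarrow> 'i set \<Rightarrow> ('i \<Rightarrow> nat)
    \<Rightarrow> ('i \<Rightarrow> 'i \<Rightarrow> complex mat set)
    \<Rightarrow> (nat \<Rightarrow> 'w \<Rightarrow> 'i \<Rightarrow> complex mat set) \<Rightarrow> ('w \<Rightarrow> 'i \<Rightarrow> complex mat set) \<Rightarrow> bool" where
  "qconv W dW A d R K Kinf \<longleftrightarrow> qfun W dW A d Kinf \<and>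
     (\<forall>w\<in>W. \<forall>x\<in>A. qcomp A dW d R Kinf w x = (\<Inter>n. qcomp A dW d R (K n) w x))"

text \<open>H_d: the quantum set with the single atom C^d (index type unit).\<close>
definition qcpo :: "'i set \<Rightarrow> ('i \<Rightarrow> nat) \<Rightarrow> ('i \<Rightarrow> 'i \<Rightarrow> complex mat set) \<Rightarrow> bool" where
  "qcpo A d R \<longleftrightarrow> qposet A d R \<and>
     (\<forall>(dd::nat) (K :: nat \<Rightarrow> unit \<Rightarrow> 'i \<Rightarrow> complex mat set). 1 \<le> dd \<longrightarrow>
        (\<forall>n. qfun {()} (\<lambda>_. dd) A d (K n)) \<longrightarrow>
        (\<forall>n. qsqle {()} (\<lambda>_. dd) A d R (K n) (K (Suc n))) \<longrightarrow>
        (\<exists>Kinf. qconv {()} (\<lambda>_. dd) A d R K Kinf))"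

end

theory Submission
  imports Defs "HOL-Library.Function_Algebras"
begin

text \<open>For fixed atoms \<open>w\<close>, \<open>x\<close> the subspaces \<open>(R \<circ> K\<^sub>n)(w, x)\<close> form a decreasing chain,
because \<open>K\<^sub>n\<^sub>+\<^sub>1 \<le> R \<circ> K\<^sub>n\<close> and \<open>R \<circ> R \<le> R\<close>. A decreasing chain of subspaces of a
finite-dimensional space stabilizes, since the dimension drops at each proper step; with finitely
many atoms all chains stabilize at a common index \<open>N\<close>, and then \<open>K\<^sub>N\<close> itself is the limit.\<close>

lemma eventually_const_if_measure_decreases:
  fixes f :: "'a \<Rightarrow> nat" and V :: "nat \<Rightarrow> 'a"
  assumes "\<And>k. V (Suc k) \<noteq> V k \<Longrightarrow> f (V (Suc k)) < f (V k)"
  shows "\<exists>N. \<forall>k\<ge>N. V k = V N"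
proof -
  obtain N where N: "\<And>k. f (V N) \<le> f (V k)"
    using ex_has_least_nat[of "\<lambda>_. True" 0 "f \<circ> V"] by auto
  have "V k = V N" if "N \<le> k" for k
    using that
  proof (induction k rule: dec_induct)
    case (step k)
    then show ?case using assms[of k] N[of "Suc k"] by fastforce
  qed simp
  then show ?thesis by blast
qed

lemma decreasing_chain_eventually_Inter:
  assumes dec: "\<And>k. V (Suc k) \<subseteq> V k" and stable: "\<And>k. N \<le> k \<Longrightarrow> V k = V N"
  shows "\<forall>\<^sub>F k in sequentially. V k = (\<Inter>n. V n)"
proof -
  have "V N \<subseteq> V n" for n
  proof (cases "n \<le> N")
    case True
    then show ?thesis using decseqD[OF decseq_SucI[of V, OF dec]] by blast
  qed (use stable[of n] in simp)
  then have "V N = (\<Inter>n. V n)" by blast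
  then have "V k = (\<Inter>n. V n)" if "N \<le> k" for k using stable[OF that] by simp
  then show ?thesis unfolding eventually_sequentially by blast
qed

context vector_space
begin

lemma dim_psubset_of_finite_span:
  assumes "subspace S" "subspace T" "S \<subset> T" "T \<subseteq> span W" "finite W"
  shows "dim S < dim T"
proof -
  obtain B where B: "B \<subseteq> S" "independent B" "S \<subseteq> span B" "card B = dim S"
    by (rule basis_exists)
  obtain t where t: "t \<in> T" "t \<notin> S" using assms(3) by auto
  have "t \<notin> span B" using span_minimal[OF B(1) assms(1)] t by auto
  then have ind: "independent (insert t B)" using independent_insertI B(2) by blast
  obtain B' where B': "insert t B \<subseteq> B'" "B' \<subseteq> T" "independent B'" "T \<subseteq> span B'"
    by (rule maximal_independent_subset_extend[of "insert t B" T])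
      (use B(1) assms(3) t ind in auto)
  have "finite B'"
    using independent_span_bound[OF assms(5) B'(3)] B'(2) assms(4) by blast
  moreover have "t \<notin> B" using B(1) t by auto
  ultimately have "card B < card B'"
    using card_mono[OF _ B'(1)] finite_subset[OF _ \<open>finite B'\<close>] B'(1) by fastforce
  then show ?thesis using B(4) basis_card_eq_dim[OF B'(2) B'(4) B'(3)] by simp
qed

lemma subspace_chain_eventually_Inter:
  assumes "\<And>k. subspace (V k)" "\<And>k. V (Suc k) \<subseteq> V k" "\<And>k. V k \<subseteq> span W" "finite W"
  shows "\<forall>\<^sub>F k in sequentially. V k = (\<Inter>n. V n)"
proof -
  obtain N where "\<forall>k\<ge>N. V k = V N"
    using eventually_const_if_measure_decreases[of V dim]
      dim_psubset_of_finite_span[OF assms(1,1)] assms(2-4) by blast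
  then show ?thesis using decreasing_chain_eventually_Inter assms(2) by blast
qed

end

text \<open>Complex matrices of any size are compared inside one vector space by identifying a
matrix with its entry function, extended by zero outside its index range.\<close>

definition entry_scale :: "complex \<Rightarrow> (nat \<times> nat \<Rightarrow> complex) \<Rightarrow> nat \<times> nat \<Rightarrow> complex" where
  "entry_scale c f = (\<lambda>p. c * f p)"

global_interpretation entries: vector_space entry_scale
  by unfold_locales (auto simp: entry_scale_def fun_eq_iff algebra_simps)

definition mat_entries :: "complex mat \<Rightarrow> nat \<times> nat \<Rightarrow> complex" where
  "mat_entries M = (\<lambda>(i, j). if i < dim_row M \<and> j < dim_col M then M $$ (i, j) else 0)"

definition entry_indicator :: "nat \<times> nat \<Rightarrow> nat \<times> nat \<Rightarrow> complex" where
  "entry_indicator p = (\<lambda>q. if q = p then 1 else 0)"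

lemma sum_fun_apply: "(\<Sum>p\<in>S. f p) x = (\<Sum>p\<in>S. f p x)"
  by (induction S rule: infinite_finite_induct) auto

lemma mat_entries_in_span:
  assumes "M \<in> carrier_mat n m"
  shows "mat_entries M \<in> entries.span (entry_indicator ` ({..<n} \<times> {..<m}))"
proof -
  have "mat_entries M = (\<Sum>p\<in>{..<n} \<times> {..<m}. entry_scale (M $$ p) (entry_indicator p))"
  proof
    fix q :: "nat \<times> nat"
    have "(\<Sum>p\<in>{..<n} \<times> {..<m}. entry_scale (M $$ p) (entry_indicator p)) q
        = (\<Sum>p\<in>{..<n} \<times> {..<m}. if p = q then M $$ p else 0)"
      unfolding sum_fun_apply entry_scale_def entry_indicator_def by (intro sum.cong) auto
    then show "mat_entries M q = (\<Sum>p\<in>{..<n} \<times> {..<m}. entry_scale (M $$ p) (entry_indicator p)) q"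
      using assms by (cases q) (auto simp: mat_entries_def sum.delta')
  qed
  then show ?thesis
    by (simp add: entries.span_sum entries.span_scale entries.span_base)
qed

lemma inj_on_mat_entries: "inj_on mat_entries (carrier_mat n m)"
proof (rule inj_onI)
  fix A B assume A: "A \<in> carrier_mat n m" and B: "B \<in> carrier_mat n m"
    and eq: "mat_entries A = mat_entries B"
  show "A = B"
  proof (rule eq_matI)
    fix i j assume "i < dim_row B" "j < dim_col B"
    then show "A $$ (i, j) = B $$ (i, j)"
      using A B fun_cong[OF eq, of "(i, j)"] by (auto simp: mat_entries_def)
  qed (use A B in auto)
qed

lemma subspace_mat_entries_image:
  assumes "msubspace n m V"
  shows "entries.subspace (mat_entries ` V)"
proof -
  have V: "V \<subseteq> carrier_mat n m" "0\<^sub>m n m \<in> V" "\<And>a b. a \<in> V \<Longrightarrow> b \<in> V \<Longrightarrow> a + b \<in> V"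
    "\<And>c a. a \<in> V \<Longrightarrow> c \<cdot>\<^sub>m a \<in> V"
    using assms by (auto simp: msubspace_def)
  have add: "mat_entries (a + b) = mat_entries a + mat_entries b" if "a \<in> V" "b \<in> V" for a b
  proof -
    have "a \<in> carrier_mat n m" "b \<in> carrier_mat n m" using that V(1) by auto
    then show ?thesis by (auto simp: mat_entries_def fun_eq_iff)
  qed
  have scale: "mat_entries (c \<cdot>\<^sub>m a) = entry_scale c (mat_entries a)" for c a
    by (auto simp: mat_entries_def entry_scale_def fun_eq_iff)
  have zero: "mat_entries (0\<^sub>m n m) = 0"
    by (auto simp: mat_entries_def fun_eq_iff)
  show ?thesis
    unfolding entries.subspace_def
  proof (intro conjI ballI allI)
    show "0 \<in> mat_entries ` V" using image_eqI[of 0 mat_entries, OF zero[symmetric] V(2)] .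
  next
    fix f g assume "f \<in> mat_entries ` V" "g \<in> mat_entries ` V"
    then obtain a b where ab: "a \<in> V" "b \<in> V" and "f = mat_entries a" "g = mat_entries b"
      by blast
    then have "f + g = mat_entries (a + b)" using add by simp
    then show "f + g \<in> mat_entries ` V" using V(3)[OF ab] by blast
  next
    fix c f assume "f \<in> mat_entries ` V"
    then obtain a where a: "a \<in> V" and "f = mat_entries a" by blast
    then have "entry_scale c f = mat_entries (c \<cdot>\<^sub>m a)" using scale by simp
    then show "entry_scale c f \<in> mat_entries ` V" using V(4)[OF a] by blast
  qed
qed

lemma msubspace_chain_eventually_Inter:
  assumes sub: "\<And>k. msubspace n m (V k)" and dec: "\<And>k. V (Suc k) \<subseteq> V k"
  shows "\<forall>\<^sub>F k in sequentially. V k = (\<Inter>j. V j)"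
proof -
  have car: "V k \<subseteq> carrier_mat n m" for k using sub by (simp add: msubspace_def)
  have "entries.subspace (mat_entries ` V k)" for k
    using subspace_mat_entries_image[OF sub] .
  moreover have "mat_entries ` V (Suc k) \<subseteq> mat_entries ` V k" for k
    using dec by (rule image_mono)
  moreover have "mat_entries ` V k \<subseteq> entries.span (entry_indicator ` ({..<n} \<times> {..<m}))" for k
    using car mat_entries_in_span by blast
  ultimately have "\<forall>\<^sub>F k in sequentially. mat_entries ` V k = (\<Inter>j. mat_entries ` V j)"
    by (intro entries.subspace_chain_eventually_Inter[where W = "entry_indicator ` ({..<n} \<times> {..<m})"])
      auto
  moreover have "(\<Inter>j. mat_entries ` V j) = mat_entries ` (\<Inter>j. V j)"
    using car by (intro image_INT[OF inj_on_mat_entries, symmetric]) auto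
  moreover have "mat_entries ` V k = mat_entries ` (\<Inter>j. V j) \<longleftrightarrow> V k = (\<Inter>j. V j)" for k
    using car by (intro inj_on_image_eq_iff[OF inj_on_mat_entries]) auto
  ultimately show ?thesis by simp
qed

lemma mspan_least: "msubspace n m V \<Longrightarrow> S \<subseteq> V \<Longrightarrow> mspan n m S \<subseteq> V"
  unfolding mspan_def by auto

lemma mspan_superset: "S \<subseteq> mspan n m S"
  unfolding mspan_def by auto

lemma msubspace_mspan:
  assumes "S \<subseteq> carrier_mat n m"
  shows "msubspace n m (mspan n m S)"
  unfolding msubspace_def
proof (intro conjI ballI allI)
  have "msubspace n m (carrier_mat n m)" unfolding msubspace_def by auto
  then show "mspan n m S \<subseteq> carrier_mat n m" using mspan_least assms by blast
  show "0\<^sub>m n m \<in> mspan n m S" unfolding mspan_def msubspace_def by auto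
  fix a b assume "a \<in> mspan n m S" "b \<in> mspan n m S"
  then show "a + b \<in> mspan n m S" unfolding mspan_def msubspace_def by auto
next
  fix c a assume "a \<in> mspan n m S"
  then show "c \<cdot>\<^sub>m a \<in> mspan n m S" unfolding mspan_def msubspace_def by auto
qed

lemma mult_left_mspan_in_msubspace:
  assumes s: "s \<in> carrier_mat n' n" and V: "msubspace n' m V"
    and gens: "\<And>t. t \<in> S \<Longrightarrow> s * t \<in> V" and S: "S \<subseteq> carrier_mat n m"
    and t: "t \<in> mspan n m S"
  shows "s * t \<in> V"
proof -
  define Q where "Q = {r \<in> carrier_mat n m. s * r \<in> V}"
  have "msubspace n m Q" unfolding msubspace_def
  proof (intro conjI ballI allI)
    show "Q \<subseteq> carrier_mat n m" unfolding Q_def by auto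
    show "0\<^sub>m n m \<in> Q" using s V unfolding Q_def msubspace_def by simp
    fix a b assume "a \<in> Q" "b \<in> Q"
    then show "a + b \<in> Q"
      using s V unfolding Q_def msubspace_def by (auto simp: mult_add_distrib_mat)
  next
    fix c a assume "a \<in> Q"
    then show "c \<cdot>\<^sub>m a \<in> Q"
      using s V unfolding Q_def msubspace_def by (auto simp: mult_smult_distrib)
  qed
  moreover have "S \<subseteq> Q" using S gens unfolding Q_def by auto
  ultimately have "mspan n m S \<subseteq> Q" by (rule mspan_least)
  then show ?thesis using t unfolding Q_def by blast
qed

lemma qrel_carrier:
  "qrel A dA B dB R \<Longrightarrow> x \<in> A \<Longrightarrow> y \<in> B \<Longrightarrow> r \<in> R x y \<Longrightarrow> r \<in> carrier_mat (dB y) (dA x)"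
  unfolding qrel_def msubspace_def by blast

lemma qrel_qcomp:
  assumes R: "qrel A dA B dB R" and S: "qrel B dB C dC S"
  shows "qrel A dA C dC (qcomp B dA dC S R)"
  unfolding qrel_def qcomp_def
proof (intro ballI msubspace_mspan subsetI)
  fix x z t assume x: "x \<in> A" and z: "z \<in> C"
    and "t \<in> {s * r |y r s. y \<in> B \<and> r \<in> R x y \<and> s \<in> S y z}"
  then obtain y r s where t: "t = s * r" "y \<in> B" "r \<in> R x y" "s \<in> S y z" by blast
  then show "t \<in> carrier_mat (dC z) (dA x)"
    using qrel_carrier[OF R x t(2,3)] qrel_carrier[OF S t(2) z t(4)] by simp
qed

lemma qcomp_antimono_qsqle:
  assumes P: "qposet A d R" and F: "qrel W dW A d F" and G: "qrel W dW A d G"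
    and FG: "qsqle W dW A d R F G"
  shows "qle W A (qcomp A dW d R G) (qcomp A dW d R F)"
  unfolding qle_def
proof (intro ballI)
  fix w x assume w: "w \<in> W" and x: "x \<in> A"
  have R: "qrel A d A d R" and trans: "qle A A (qcomp A d d R R) R"
    using P unfolding qposet_def by auto
  have RF: "qrel W dW A d (qcomp A dW d R F)" using qrel_qcomp[OF F R] .
  have RFx: "msubspace (d x) (dW w) (qcomp A dW d R F w x)"
    using RF w x unfolding qrel_def by blast
  define gens where "gens y = {s' * r' |y' r' s'. y' \<in> A \<and> r' \<in> F w y' \<and> s' \<in> R y' y}" for y
  have RF_gens: "qcomp A dW d R F w y = mspan (d y) (dW w) (gens y)" for y
    by (simp add: qcomp_def gens_def)
  have "s * r \<in> qcomp A dW d R F w x" if y: "y \<in> A" and r: "r \<in> G w y" and s: "s \<in> R y x"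
    for y r s
  proof (rule mult_left_mspan_in_msubspace[OF qrel_carrier[OF R y x s] RFx])
    have "G w y \<subseteq> qcomp A dW d R F w y" using FG w y unfolding qsqle_def qle_def by blast
    then show "r \<in> mspan (d y) (dW w) (gens y)" using r RF_gens by auto
    have "mspan (d y) (dW w) (gens y) \<subseteq> carrier_mat (d y) (dW w)"
      using RF w y RF_gens unfolding qrel_def msubspace_def by metis
    then show "gens y \<subseteq> carrier_mat (d y) (dW w)"
      using mspan_superset by blast
    fix t assume "t \<in> gens y"
    then obtain y' r' s' where t: "t = s' * r'" "y' \<in> A" "r' \<in> F w y'" "s' \<in> R y' y"
      unfolding gens_def by blast
    have "s * s' \<in> qcomp A d d R R y' x"
      unfolding qcomp_def using t y s by (intro subsetD[OF mspan_superset]) blast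
    then have ss': "s * s' \<in> R y' x" using trans t(2) x unfolding qle_def by blast
    have "s * t = (s * s') * r'"
      using t(1) qrel_carrier[OF R y x s] qrel_carrier[OF R t(2) y t(4)] qrel_carrier[OF F w t(2,3)]
      by (simp add: assoc_mult_mat)
    then show "s * t \<in> qcomp A dW d R F w x"
      unfolding qcomp_def using t(2,3) ss' by (intro subsetD[OF mspan_superset]) blast
  qed
  then show "qcomp A dW d R G w x \<subseteq> qcomp A dW d R F w x"
    using RFx unfolding qcomp_def[of A dW d R G] by (intro mspan_least) auto
qed

lemma qsqle_chain_qcomp_stabilizes:
  assumes P: "qposet A d R" and "finite A" "finite W"
    and rel: "\<And>n. qrel W dW A d (K n)" and incr: "\<And>n. qsqle W dW A d R (K n) (K (Suc n))"
  shows "\<exists>N. \<forall>w\<in>W. \<forall>x\<in>A. qcomp A dW d R (K N) w x = (\<Inter>n. qcomp A dW d R (K n) w x)"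
proof -
  define V where "V k = qcomp A dW d R (K k)" for k
  have R: "qrel A d A d R" using P unfolding qposet_def by blast
  have "\<forall>\<^sub>F k in sequentially. V k w x = (\<Inter>n. V n w x)" if wx: "(w, x) \<in> W \<times> A" for w x
  proof (rule msubspace_chain_eventually_Inter)
    show "msubspace (d x) (dW w) (V k w x)" for k
      using qrel_qcomp[OF rel R] wx unfolding V_def qrel_def by blast
    show "V (Suc k) w x \<subseteq> V k w x" for k
      using qcomp_antimono_qsqle[OF P rel rel incr] wx unfolding V_def qle_def by blast
  qed
  then have "\<forall>\<^sub>F k in sequentially. \<forall>(w, x)\<in>W \<times> A. V k w x = (\<Inter>n. V n w x)"
    using assms(2,3) by (intro eventually_ball_finite) auto
  then obtain N where "\<forall>k\<ge>N. \<forall>(w, x)\<in>W \<times> A. V k w x = (\<Inter>n. V n w x)"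
    unfolding eventually_sequentially ..
  then show ?thesis unfolding V_def by blast
qed

theorem mainTheorem7:
  fixes A :: "'i set" and d :: "'i \<Rightarrow> nat" and R :: "'i \<Rightarrow> 'i \<Rightarrow> complex mat set"
  assumes "qposet A d R" and "finite A"
  shows "qcpo A d R"
  unfolding qcpo_def
proof (intro conjI allI impI assms(1))
  fix dd :: nat and K :: "nat \<Rightarrow> unit \<Rightarrow> 'i \<Rightarrow> complex mat set"
  assume maps: "\<forall>n. qfun {()} (\<lambda>_. dd) A d (K n)"
    and incr: "\<forall>n. qsqle {()} (\<lambda>_. dd) A d R (K n) (K (Suc n))"
  have "\<And>n. qrel {()} (\<lambda>_. dd) A d (K n)" using maps unfolding qfun_def by blast
  then obtain N where "\<forall>w\<in>{()}. \<forall>x\<in>A.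
      qcomp A (\<lambda>_. dd) d R (K N) w x = (\<Inter>n. qcomp A (\<lambda>_. dd) d R (K n) w x)"
    using qsqle_chain_qcomp_stabilizes[OF assms] incr by blast
  then have "qconv {()} (\<lambda>_. dd) A d R K (K N)"
    unfolding qconv_def using maps by blast
  then show "\<exists>Kinf. qconv {()} (\<lambda>_. dd) A d R K Kinf" by blast
qed

end
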